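(* Let $\mathcal{K}$ be an amenable closed convex cone in a finite-dimensional Euclidean space and let $P$ be a polyhedral set. Then $\mathcal{K}\cap P$ is an amenable convex set. In particular, if $\mathcal{K}$ is pointed, then $\mathcal{K}=\operatorname{cone}C$ for some compact amenable convex set $C$ (a slice of $\mathcal{K}$).
   Context: $\operatorname{cone}C=\{\lambda x: x\in C,\lambda\ge0\}$. Pointed means $\mathcal{K}\cap(-\mathcal{K})=\{0\}$. A face of a closed convex set $C$ is a closed convex subset $F\subseteq C$ such that whenever $x,y\in C$ and $\alpha x+(1-\alpha)y\in F$ for some $\alpha\in(0,1)$, then $x,y\in F$. A face $F$ of $C$ is amenable if for every bounded set $B$ there exists $\kappa>0$ such that $\operatorname{dist}(x,F)\le\kappa\operatorname{dist}(x,C)$ for all $x\in(\operatorname{aff}F)\cap B$; $C$ is amenable if all its faces are amenable. *)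

theory Defs
  imports "HOL-Analysis.Analysis"
begin

definition is_face :: "'a::euclidean_space set \<Rightarrow> 'a set \<Rightarrow> bool" where
  "is_face F C \<longleftrightarrow> closed F \<and> convex F \<and> F \<subseteq> C \<and>
     (\<forall>x\<in>C. \<forall>y\<in>C. \<forall>\<alpha>::real. 0 < \<alpha> \<and> \<alpha> < 1 \<and> \<alpha> *\<^sub>R x + (1 - \<alpha>) *\<^sub>R y \<in> F
        \<longrightarrow> x \<in> F \<and> y \<in> F)"

definition amenable_face :: "'a::euclidean_space set \<Rightarrow> 'a set \<Rightarrow> bool" where
  "amenable_face F C \<longleftrightarrow>
     (\<forall>B. bounded B \<longrightarrow> (\<exists>\<kappa>>0. \<forall>x \<in> (affine hull F) \<inter> B.
        infdist x F \<le> \<kappa> * infdist x C))"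

definition amenable_set :: "'a::euclidean_space set \<Rightarrow> bool" where
  "amenable_set C \<longleftrightarrow> closed C \<and> convex C \<and> (\<forall>F. is_face F C \<longrightarrow> amenable_face F C)"

definition cone_gen :: "'a::real_vector set \<Rightarrow> 'a set" where
  "cone_gen C = {t *\<^sub>R x | t x. x \<in> C \<and> (0::real) \<le> t}"

definition pointed :: "'a::real_vector set \<Rightarrow> bool" where
  "pointed K \<longleftrightarrow> K \<inter> uminus ` K = {0}"

end

theory Submission
  imports Defs
begin

text \<open>
  A polyhedron is a finite intersection of halfspaces, so it suffices that amenability survives
  intersection with one halfspace \<open>H = {x. a \<bullet> x \<le> b}\<close>. A nonempty face \<open>G\<close> of \<open>C \<inter> H\<close> is
  pinned down by a point \<open>z\<close> of its relative interior: if \<open>F\<close> is the face of \<open>C\<close> having \<open>z\<close> in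
  its relative interior, then \<open>G = F \<inter> H\<close> when \<open>a \<bullet> z < b\<close>, and \<open>G = F \<inter> {x. a \<bullet> x = b}\<close>
  when \<open>a \<bullet> z = b\<close>. The error bound of \<open>F\<close> relative to \<open>C\<close> yields one for \<open>G\<close> relative to
  \<open>C \<inter> H\<close>: project \<open>x\<close> onto \<open>F\<close>, then move the projection \<open>y\<close> inside \<open>F\<close> towards a point
  strictly on the other side of the hyperplane until it reaches \<open>G\<close>. That move is proportional
  to the violation \<open>\<bar>a \<bullet> y - b\<bar>\<close>, which is controlled by the distances from \<open>x\<close> to \<open>F\<close>
  and to \<open>C \<inter> H\<close>.
\<close>

lemma is_face_iff_closed_face_of:
  fixes F C :: "'a::euclidean_space set"
  shows "is_face F C \<longleftrightarrow> closed F \<and> F face_of C"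
proof -
  have "(\<forall>x\<in>C. \<forall>y\<in>C. \<forall>\<alpha>::real. 0 < \<alpha> \<and> \<alpha> < 1 \<and> \<alpha> *\<^sub>R x + (1 - \<alpha>) *\<^sub>R y \<in> F \<longrightarrow> x \<in> F \<and> y \<in> F)
      \<longleftrightarrow> (\<forall>a\<in>C. \<forall>b\<in>C. \<forall>x\<in>F. x \<in> open_segment a b \<longrightarrow> a \<in> F \<and> b \<in> F)"
    (is "?is_face \<longleftrightarrow> ?face_of")
  proof
    assume ?is_face
    show ?face_of
    proof (intro ballI impI)
      fix a b x
      assume "a \<in> C" "b \<in> C" "x \<in> F" "x \<in> open_segment a b"
      then obtain u where "0 < 1 - u \<and> 1 - u < 1 \<and> (1 - u) *\<^sub>R a + (1 - (1 - u)) *\<^sub>R b \<in> F"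
        by (auto simp: in_segment)
      then show "a \<in> F \<and> b \<in> F"
        using \<open>?is_face\<close> \<open>a \<in> C\<close> \<open>b \<in> C\<close> by blast
    qed
  next
    assume ?face_of
    show ?is_face
    proof (intro ballI allI impI)
      fix x y and \<alpha> :: real
      assume "x \<in> C" "y \<in> C" and \<alpha>: "0 < \<alpha> \<and> \<alpha> < 1 \<and> \<alpha> *\<^sub>R x + (1 - \<alpha>) *\<^sub>R y \<in> F"
      show "x \<in> F \<and> y \<in> F"
      proof (cases "x = y")
        case True
        then show ?thesis using \<alpha> by (simp add: scaleR_add_left[symmetric])
      next
        case False
        then have "\<alpha> *\<^sub>R x + (1 - \<alpha>) *\<^sub>R y \<in> open_segment x y"
          using \<alpha> unfolding in_segment by (intro conjI exI[of _ "1 - \<alpha>"]) auto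
        then show ?thesis
          using \<open>?face_of\<close> \<open>x \<in> C\<close> \<open>y \<in> C\<close> \<alpha> by blast
      qed
    qed
  qed
  then show ?thesis
    unfolding is_face_def face_of_def by argo
qed

lemma rel_interior_extension:
  fixes S :: "'a::euclidean_space set"
  assumes "convex S" "z \<in> rel_interior S" "y \<in> S"
  obtains e where "0 < e" "\<And>t. 0 \<le> t \<Longrightarrow> t \<le> e \<Longrightarrow> z + t *\<^sub>R (z - y) \<in> S"
proof -
  obtain m where "1 < m" and m: "\<forall>s. 1 < s \<and> s \<le> m \<longrightarrow> (1 - s) *\<^sub>R y + s *\<^sub>R z \<in> S"
    using convex_rel_interior_if[OF assms(1,2)] hull_inc[OF assms(3)] by blast
  have "z + t *\<^sub>R (z - y) \<in> S" if "0 \<le> t" "t \<le> m - 1" for t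
  proof (cases "t = 0")
    case True
    then show ?thesis
      using assms(2) rel_interior_subset by auto
  next
    case False
    then have "1 < 1 + t \<and> 1 + t \<le> m"
      using that by simp
    then have "(1 - (1 + t)) *\<^sub>R y + (1 + t) *\<^sub>R z \<in> S"
      using m by blast
    then show ?thesis
      by (simp add: algebra_simps)
  qed
  moreover have "0 < m - 1"
    using \<open>1 < m\<close> by simp
  ultimately show ?thesis
    using that by blast
qed

lemma face_of_with_rel_interior_point:
  fixes S :: "'a::euclidean_space set"
  assumes "convex S" "x \<in> S"
  obtains F where "F face_of S" "x \<in> rel_interior F"
proof -
  \<comment> \<open>A face through \<open>x\<close> of least dimension works: otherwise a supporting hyperplane at \<open>x\<close>
    cuts a smaller face through \<open>x\<close> out of it.\<close>
  obtain F where F: "F face_of S" "x \<in> F"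
    and least: "\<And>T. T face_of S \<Longrightarrow> x \<in> T \<Longrightarrow> nat (aff_dim F + 1) \<le> nat (aff_dim T + 1)"
    using ex_has_least_nat[of "\<lambda>T. T face_of S \<and> x \<in> T" S "\<lambda>T. nat (aff_dim T + 1)"]
      assms face_of_refl by blast
  have "convex F"
    using F(1) face_of_imp_convex by blast
  have "x \<in> rel_interior F"
  proof (rule ccontr)
    assume "x \<notin> rel_interior F"
    then obtain a where a: "\<And>y. y \<in> F \<Longrightarrow> a \<bullet> x \<le> a \<bullet> y"
      and strict: "\<And>y. y \<in> rel_interior F \<Longrightarrow> a \<bullet> x < a \<bullet> y"
      using supporting_hyperplane_rel_boundary \<open>convex F\<close> F(2) by metis
    define T where "T = F \<inter> {y. a \<bullet> y = a \<bullet> x}"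
    have "T face_of F"
      unfolding T_def using \<open>convex F\<close> a by (rule face_of_Int_supporting_hyperplane_ge)
    moreover have "T \<noteq> F"
    proof -
      obtain y where "y \<in> rel_interior F"
        using \<open>convex F\<close> F(2) rel_interior_eq_empty by blast
      then have "y \<in> F - T"
        using strict[of y] rel_interior_subset unfolding T_def by fastforce
      then show ?thesis
        by blast
    qed
    ultimately have "aff_dim T < aff_dim F"
      by (rule face_of_aff_dim_lt[OF \<open>convex F\<close>])
    moreover have "nat (aff_dim F + 1) \<le> nat (aff_dim T + 1)"
    proof (rule least)
      show "T face_of S"
        using \<open>T face_of F\<close> F(1) by (rule face_of_trans)
      show "x \<in> T"
        unfolding T_def using F(2) by simp
    qed
    ultimately show False
      using aff_dim_geq[of T] by linarith
  qed
  then show ?thesis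
    using F that by blast
qed

lemma rel_interior_hyperplane_both_sides:
  fixes F :: "'a::euclidean_space set"
  assumes "convex F" "z \<in> rel_interior F" "a \<bullet> z = b" "\<not> F \<subseteq> {x. a \<bullet> x = b}"
  obtains p q where "p \<in> F" "q \<in> F" "a \<bullet> p < b" "b < a \<bullet> q"
proof -
  obtain u where "u \<in> F" "a \<bullet> u \<noteq> b"
    using assms(4) by auto
  then obtain e where "0 < e" "z + e *\<^sub>R (z - u) \<in> F"
    using rel_interior_extension[OF assms(1,2)] by (metis order.refl less_imp_le)
  moreover have "a \<bullet> (z + e *\<^sub>R (z - u)) - b = e * (b - a \<bullet> u)"
    using assms(3) by (simp add: inner_simps algebra_simps)
  ultimately show ?thesis
  proof (cases "a \<bullet> u < b")
    case True
    then have "0 < e * (b - a \<bullet> u)"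
      using \<open>0 < e\<close> by simp
    then show ?thesis
      using that[OF \<open>u \<in> F\<close> \<open>z + e *\<^sub>R (z - u) \<in> F\<close>] True \<open>a \<bullet> (z + e *\<^sub>R (z - u)) - b = _\<close>
      by linarith
  next
    case False
    then have "b < a \<bullet> u"
      using \<open>a \<bullet> u \<noteq> b\<close> by linarith
    then have "0 < e * (a \<bullet> u - b)"
      using \<open>0 < e\<close> by simp
    moreover have "e * (b - a \<bullet> u) = - (e * (a \<bullet> u - b))"
      by (simp add: algebra_simps)
    ultimately show ?thesis
      using that[OF \<open>z + e *\<^sub>R (z - u) \<in> F\<close> \<open>u \<in> F\<close>] \<open>b < a \<bullet> u\<close>
        \<open>a \<bullet> (z + e *\<^sub>R (z - u)) - b = _\<close>
      by linarith
  qed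
qed

lemma face_of_Int_eq_via_rel_interior:
  fixes C S T F G :: "'a::euclidean_space set"
  assumes "G face_of C \<inter> S" "F face_of C" "convex T" "G \<subseteq> T" "T \<subseteq> S"
    and "z \<in> rel_interior G" "z \<in> rel_interior F" "z \<in> rel_interior T"
  shows "G = F \<inter> T"
proof
  have "G \<subseteq> C"
    using assms(1) face_of_imp_subset by blast
  moreover have "F \<inter> rel_interior G \<noteq> {}"
    using assms(6,7) rel_interior_subset by blast
  ultimately have "G \<subseteq> F"
    by (rule subset_of_face_of[OF assms(2)])
  then show "G \<subseteq> F \<inter> T"
    using assms(4) by blast
  have "rel_interior (F \<inter> T) = rel_interior F \<inter> rel_interior T"
    using assms(7,8) by (intro convex_rel_interior_inter_two face_of_imp_convex[OF assms(2)] assms(3)) blast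
  then have "G \<inter> rel_interior (F \<inter> T) \<noteq> {}"
    using assms(6-8) rel_interior_subset by blast
  moreover have "F \<inter> T \<subseteq> C \<inter> S"
    using assms(2,5) face_of_imp_subset by blast
  ultimately show "F \<inter> T \<subseteq> G"
    using subset_of_face_of[OF assms(1)] by blast
qed

lemma inner_diff_le_norm_dist:
  fixes a u v :: "'a::euclidean_space"
  shows "a \<bullet> u - a \<bullet> v \<le> norm a * dist u v"
  using norm_cauchy_schwarz[of a "u - v"] by (simp add: inner_diff_right dist_norm)

lemma dist_le_of_nearer:
  fixes x y p :: "'a::real_normed_vector"
  assumes "dist x y \<le> dist x p"
  shows "dist y p \<le> 2 * (norm x + norm p)"
proof -
  have "dist y p \<le> dist x y + dist x p"
    by (rule dist_triangle3)
  moreover have "dist x p \<le> norm x + norm p"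
    unfolding dist_norm by (rule norm_triangle_ineq4)
  ultimately show ?thesis
    using assms by simp
qed

lemma hyperplane_crossing_point:
  fixes F :: "'a::euclidean_space set"
  assumes "convex F" "p \<in> F" "y \<in> F" "a \<bullet> p < b" "b \<le> a \<bullet> y"
  obtains w where "w \<in> F" "a \<bullet> w = b" "dist y w \<le> (a \<bullet> y - b) * dist y p / (b - a \<bullet> p)"
proof -
  define l where "l = (a \<bullet> y - b) / (a \<bullet> y - a \<bullet> p)"
  have "0 \<le> l" "l \<le> 1"
    using assms(4,5) by (auto simp: l_def divide_simps)
  define w where "w = (1 - l) *\<^sub>R y + l *\<^sub>R p"
  have "w \<in> F"
    unfolding w_def using assms(1-3) \<open>0 \<le> l\<close> \<open>l \<le> 1\<close> by (intro convexD) auto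
  moreover have "a \<bullet> w = b"
  proof -
    have "a \<bullet> w = a \<bullet> y - l * (a \<bullet> y - a \<bullet> p)"
      by (simp add: w_def inner_simps algebra_simps)
    then show ?thesis
      using assms(4,5) by (simp add: l_def)
  qed
  moreover have "dist y w = l * dist y p"
    using \<open>0 \<le> l\<close> by (simp add: w_def dist_norm algebra_simps flip: scaleR_diff_right)
  moreover have "l * dist y p \<le> (a \<bullet> y - b) / (b - a \<bullet> p) * dist y p"
    unfolding l_def using assms(4,5) by (intro mult_right_mono divide_left_mono) auto
  ultimately show ?thesis
    using that by simp
qed

lemma infdist_halfspace_section_le:
  fixes F G :: "'a::euclidean_space set"
  assumes "convex F" "p \<in> F" "a \<bullet> p < b" "y \<in> F" "F \<inter> {x. a \<bullet> x \<le> b} \<subseteq> G"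
  shows "infdist y G \<le> max 0 (a \<bullet> y - b) * dist y p / (b - a \<bullet> p)"
proof (cases "a \<bullet> y \<le> b")
  case True
  then show ?thesis
    using assms(3-5) by auto
next
  case False
  then obtain w where "w \<in> F" "a \<bullet> w = b" "dist y w \<le> (a \<bullet> y - b) * dist y p / (b - a \<bullet> p)"
    using hyperplane_crossing_point[OF assms(1,2,4,3)] by auto
  then show ?thesis
    using False assms(5) infdist_le[of w G y] by auto
qed

lemma infdist_hyperplane_section_le:
  fixes F G :: "'a::euclidean_space set"
  assumes "convex F" "p \<in> F" "q \<in> F" "a \<bullet> p < b" "b < a \<bullet> q" "y \<in> F"
    and "F \<inter> {x. a \<bullet> x = b} \<subseteq> G"
  shows "infdist y G \<le> \<bar>a \<bullet> y - b\<bar> * (dist y p + dist y q) / min (b - a \<bullet> p) (a \<bullet> q - b)"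
proof -
  have bound: "infdist y G \<le> \<bar>a \<bullet> y - b\<bar> * (dist y p + dist y q) / min (b - a \<bullet> p) (a \<bullet> q - b)"
    if "w \<in> G" "dist y w \<le> \<bar>a \<bullet> y - b\<bar> * d / \<delta>" "0 \<le> d" "d \<le> dist y p + dist y q"
      "\<delta> \<ge> min (b - a \<bullet> p) (a \<bullet> q - b)" for w d \<delta>
  proof -
    have "\<bar>a \<bullet> y - b\<bar> * d / \<delta> \<le> \<bar>a \<bullet> y - b\<bar> * (dist y p + dist y q) / min (b - a \<bullet> p) (a \<bullet> q - b)"
      using that assms(4,5) by (intro frac_le mult_left_mono) auto
    then show ?thesis
      using that infdist_le[of w G y] by linarith
  qed
  consider "a \<bullet> y = b" | "b < a \<bullet> y" | "a \<bullet> y < b"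
    by linarith
  then show ?thesis
  proof cases
    case 1
    then show ?thesis
      using assms(6,7) by auto
  next
    case 2
    then obtain w where "w \<in> F" "a \<bullet> w = b" "dist y w \<le> (a \<bullet> y - b) * dist y p / (b - a \<bullet> p)"
      using hyperplane_crossing_point[OF assms(1,2,6,4)] by auto
    then show ?thesis
      using 2 assms(7) by (intro bound[of w "dist y p" "b - a \<bullet> p"]) auto
  next
    case 3
    then obtain w where "w \<in> F" "(- a) \<bullet> w = - b"
      "dist y w \<le> ((- a) \<bullet> y - (- b)) * dist y q / ((- b) - (- a) \<bullet> q)"
      using hyperplane_crossing_point[OF assms(1,3,6), of "- a" "- b"] assms(5) by auto
    then show ?thesis
      using 3 assms(7) by (intro bound[of w "dist y q" "a \<bullet> q - b"]) (auto simp: algebra_simps)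
  qed
qed

lemma halfspace_excess_le_infdist:
  fixes D :: "'a::euclidean_space set"
  assumes "closed D" "D \<noteq> {}" "D \<subseteq> {x. a \<bullet> x \<le> b}"
  shows "a \<bullet> x - b \<le> norm a * infdist x D"
proof -
  obtain d where "d \<in> D" "infdist x D = dist x d"
    using infdist_attains_inf[OF assms(1,2)] by blast
  then show ?thesis
    using inner_diff_le_norm_dist[of a x d] assms(3) by auto
qed

lemma amenable_face_subset:
  fixes F C D :: "'a::euclidean_space set"
  assumes "amenable_face F C" "D \<subseteq> C" "D \<noteq> {}"
  shows "amenable_face F D"
  unfolding amenable_face_def
proof (intro allI impI)
  fix B :: "'a set"
  assume "bounded B"
  then obtain k where "k > 0" and k: "\<forall>x\<in>affine hull F \<inter> B. infdist x F \<le> k * infdist x C"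
    using assms(1) unfolding amenable_face_def by blast
  have "infdist x F \<le> k * infdist x D" if "x \<in> affine hull F \<inter> B" for x
    using k that \<open>k > 0\<close> infdist_mono[OF assms(2,3), of x] by (meson mult_left_mono order.trans less_imp_le)
  then show "\<exists>\<kappa>>0. \<forall>x\<in>affine hull F \<inter> B. infdist x F \<le> \<kappa> * infdist x D"
    using \<open>k > 0\<close> by blast
qed

lemma amenable_face_transfer:
  fixes F G C D :: "'a::euclidean_space set"
  assumes "amenable_face F C" "closed F" "F \<noteq> {}" "D \<subseteq> C" "D \<noteq> {}"
    and "affine hull G \<subseteq> affine hull F"
    and bound: "\<And>B. bounded B \<Longrightarrow> \<exists>c\<ge>0. \<forall>x\<in>affine hull G \<inter> B. \<forall>y\<in>F.
      dist x y = infdist x F \<longrightarrow> infdist y G \<le> c * (dist x y + infdist x D)"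
  shows "amenable_face G D"
  unfolding amenable_face_def
proof (intro allI impI)
  fix B :: "'a set"
  assume "bounded B"
  obtain k where "k > 0" and k: "\<And>x. x \<in> affine hull F \<inter> B \<Longrightarrow> infdist x F \<le> k * infdist x C"
    using assms(1) \<open>bounded B\<close> unfolding amenable_face_def by blast
  obtain c where "c \<ge> 0" and c: "\<And>x y. x \<in> affine hull G \<inter> B \<Longrightarrow> y \<in> F \<Longrightarrow>
      dist x y = infdist x F \<Longrightarrow> infdist y G \<le> c * (dist x y + infdist x D)"
    using bound[OF \<open>bounded B\<close>] by blast
  have "infdist x G \<le> (k + c * (k + 1)) * infdist x D" if x: "x \<in> affine hull G \<inter> B" for x
  proof -
    obtain y where "y \<in> F" and y: "infdist x F = dist x y"
      using infdist_attains_inf[OF assms(2,3)] by blast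
    have "dist x y \<le> k * infdist x C"
      using k[of x] x assms(6) y by auto
    also have "\<dots> \<le> k * infdist x D"
      using \<open>k > 0\<close> infdist_mono[OF assms(4,5)] by simp
    finally have xy: "dist x y \<le> k * infdist x D" .
    have "infdist x G \<le> infdist y G + dist x y"
      by (rule infdist_triangle)
    also have "\<dots> \<le> c * (dist x y + infdist x D) + dist x y"
      using c[OF x \<open>y \<in> F\<close>] y by simp
    also have "\<dots> \<le> c * (k * infdist x D + infdist x D) + k * infdist x D"
      using xy \<open>c \<ge> 0\<close> by (intro add_mono mult_left_mono) auto
    finally show ?thesis
      by (simp add: algebra_simps)
  qed
  moreover have "k + c * (k + 1) > 0"
    using \<open>k > 0\<close> \<open>c \<ge> 0\<close> by (simp add: add_pos_nonneg)
  ultimately show "\<exists>\<kappa>>0. \<forall>x\<in>affine hull G \<inter> B. infdist x G \<le> \<kappa> * infdist x D"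
    by blast
qed

lemma amenable_face_Int_halfspace:
  fixes F C D :: "'a::euclidean_space set"
  assumes "amenable_face F C" "closed F" "convex F" "p \<in> F" "a \<bullet> p < b"
    and "closed D" "D \<noteq> {}" "D \<subseteq> C \<inter> {x. a \<bullet> x \<le> b}"
  shows "amenable_face (F \<inter> {x. a \<bullet> x \<le> b}) D"
proof (rule amenable_face_transfer[OF assms(1,2)])
  show "F \<noteq> {}" "D \<subseteq> C" "D \<noteq> {}"
    using assms(4,7,8) by auto
  show "affine hull (F \<inter> {x. a \<bullet> x \<le> b}) \<subseteq> affine hull F"
    by (simp add: hull_mono)
  fix B :: "'a set"
  assume "bounded B"
  then obtain R where R: "\<And>x. x \<in> B \<Longrightarrow> norm x \<le> R" and "R > 0"
    by (auto simp: bounded_pos)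
  define c where "c = norm a * (2 * (R + norm p)) / (b - a \<bullet> p)"
  have "infdist y (F \<inter> {x. a \<bullet> x \<le> b}) \<le> c * (dist x y + infdist x D)"
    if "x \<in> B" "y \<in> F" "dist x y = infdist x F" for x y
  proof -
    have "dist y p \<le> 2 * (R + norm p)"
      using dist_le_of_nearer[of x y p] infdist_le[OF assms(4), of x] R[OF \<open>x \<in> B\<close>] that(3)
      by simp
    moreover have "max 0 (a \<bullet> y - b) \<le> norm a * (dist x y + infdist x D)"
      using inner_diff_le_norm_dist[of a y x] halfspace_excess_le_infdist[OF assms(6,7), of a b x]
        assms(8) infdist_nonneg[of x D] by (auto simp: dist_commute distrib_left)
    ultimately have "max 0 (a \<bullet> y - b) * dist y p / (b - a \<bullet> p)
        \<le> norm a * (dist x y + infdist x D) * (2 * (R + norm p)) / (b - a \<bullet> p)"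
      using assms(5) by (intro divide_right_mono mult_mono) auto
    then show ?thesis
      using infdist_halfspace_section_le[OF assms(3,4,5) \<open>y \<in> F\<close> order.refl]
      by (simp add: c_def mult_ac)
  qed
  moreover have "c \<ge> 0"
    using assms(5) \<open>R > 0\<close> by (simp add: c_def)
  ultimately show "\<exists>c\<ge>0. \<forall>x\<in>affine hull (F \<inter> {x. a \<bullet> x \<le> b}) \<inter> B. \<forall>y\<in>F.
      dist x y = infdist x F \<longrightarrow> infdist y (F \<inter> {x. a \<bullet> x \<le> b}) \<le> c * (dist x y + infdist x D)"
    by blast
qed

lemma amenable_face_Int_hyperplane:
  fixes F C D :: "'a::euclidean_space set"
  assumes "amenable_face F C" "closed F" "convex F" "p \<in> F" "q \<in> F" "a \<bullet> p < b" "b < a \<bullet> q"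
    and "D \<subseteq> C" "D \<noteq> {}"
  shows "amenable_face (F \<inter> {x. a \<bullet> x = b}) D"
proof (rule amenable_face_transfer[OF assms(1,2) _ assms(8,9)])
  show "F \<noteq> {}"
    using assms(4) by auto
  show "affine hull (F \<inter> {x. a \<bullet> x = b}) \<subseteq> affine hull F"
    by (simp add: hull_mono)
  fix B :: "'a set"
  assume "bounded B"
  then obtain R where R: "\<And>x. x \<in> B \<Longrightarrow> norm x \<le> R" and "R > 0"
    by (auto simp: bounded_pos)
  define \<delta> where "\<delta> = min (b - a \<bullet> p) (a \<bullet> q - b)"
  define c where "c = norm a * (2 * (R + norm p) + 2 * (R + norm q)) / \<delta>"
  have "infdist y (F \<inter> {x. a \<bullet> x = b}) \<le> c * (dist x y + infdist x D)"
    if "x \<in> affine hull (F \<inter> {x. a \<bullet> x = b})" "x \<in> B" "y \<in> F" "dist x y = infdist x F" for x y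
  proof -
    have "affine hull (F \<inter> {x. a \<bullet> x = b}) \<subseteq> {x. a \<bullet> x = b}"
      by (intro hull_minimal affine_hyperplane) auto
    then have "a \<bullet> x = b"
      using that(1) by auto
    then have "\<bar>a \<bullet> y - b\<bar> \<le> norm a * (dist x y + infdist x D)"
      using inner_diff_le_norm_dist[of a y x] inner_diff_le_norm_dist[of a x y]
        mult_nonneg_nonneg[OF norm_ge_zero infdist_nonneg, of a x D]
      by (auto simp: dist_commute distrib_left)
    moreover have "dist y p + dist y q \<le> 2 * (R + norm p) + 2 * (R + norm q)"
      using dist_le_of_nearer[of x y p] dist_le_of_nearer[of x y q] infdist_le[OF assms(4), of x]
        infdist_le[OF assms(5), of x] R[OF \<open>x \<in> B\<close>] that(4) by simp
    ultimately have "\<bar>a \<bullet> y - b\<bar> * (dist y p + dist y q) / \<delta>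
        \<le> norm a * (dist x y + infdist x D) * (2 * (R + norm p) + 2 * (R + norm q)) / \<delta>"
      using assms(6,7) by (intro divide_right_mono mult_mono) (auto simp: \<delta>_def)
    then show ?thesis
      using infdist_hyperplane_section_le[OF assms(3-7) \<open>y \<in> F\<close> order.refl]
      by (simp add: c_def \<delta>_def mult_ac)
  qed
  moreover have "c \<ge> 0"
    using assms(6,7) \<open>R > 0\<close> by (simp add: c_def \<delta>_def)
  ultimately show "\<exists>c\<ge>0. \<forall>x\<in>affine hull (F \<inter> {x. a \<bullet> x = b}) \<inter> B. \<forall>y\<in>F.
      dist x y = infdist x F \<longrightarrow> infdist y (F \<inter> {x. a \<bullet> x = b}) \<le> c * (dist x y + infdist x D)"
    by blast
qed

lemma face_of_Int_halfspace_cases: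
  fixes C F G :: "'a::euclidean_space set"
  assumes "convex C" "G face_of C \<inter> {x. a \<bullet> x \<le> b}" "F face_of C"
    and z: "z \<in> rel_interior G" "z \<in> rel_interior F"
  shows "a \<bullet> z < b \<Longrightarrow> G = F \<inter> {x. a \<bullet> x \<le> b}"
    and "a \<bullet> z = b \<Longrightarrow> G = F \<inter> {x. a \<bullet> x = b}"
proof -
  define D where "D = C \<inter> {x. a \<bullet> x \<le> b}"
  have "G \<subseteq> D" "z \<in> D"
    using assms(2) z(1) face_of_imp_subset rel_interior_subset unfolding D_def by blast+
  note G_eq = face_of_Int_eq_via_rel_interior[OF assms(2,3) _ _ _ z]
  show "G = F \<inter> {x. a \<bullet> x \<le> b}" if "a \<bullet> z < b"
  proof -
    have "{x. a \<bullet> x < b} \<subseteq> interior {x. a \<bullet> x \<le> b}"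
      by (rule interior_maximal) (auto simp: open_halfspace_lt)
    then have "z \<in> rel_interior {x. a \<bullet> x \<le> b}"
      using that interior_subset_rel_interior by blast
    moreover have "G \<subseteq> {x. a \<bullet> x \<le> b}"
      using \<open>G \<subseteq> D\<close> by (simp add: D_def)
    ultimately show ?thesis
      using G_eq[OF convex_halfspace_le _ order.refl] by blast
  qed
  show "G = F \<inter> {x. a \<bullet> x = b}" if "a \<bullet> z = b"
  proof -
    have "convex D"
      unfolding D_def using assms(1) by (intro convex_Int convex_halfspace_le)
    then have "D \<inter> {x. a \<bullet> x = b} face_of D"
      by (rule face_of_Int_supporting_hyperplane_le) (simp add: D_def)
    moreover have "(D \<inter> {x. a \<bullet> x = b}) \<inter> rel_interior G \<noteq> {}"
      using z(1) \<open>z \<in> D\<close> that by blast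
    ultimately have "G \<subseteq> D \<inter> {x. a \<bullet> x = b}"
      using \<open>G \<subseteq> D\<close> subset_of_face_of by blast
    moreover have "rel_interior {x. a \<bullet> x = b} = {x. a \<bullet> x = b}"
      by (rule rel_interior_affine[OF affine_hyperplane])
    moreover have "{x. a \<bullet> x = b} \<subseteq> {x. a \<bullet> x \<le> b}"
      by auto
    ultimately show ?thesis
      using G_eq[OF convex_hyperplane] that by blast
  qed
qed

lemma face_of_Int_halfspace_imp_amenable:
  fixes C G :: "'a::euclidean_space set"
  assumes "amenable_set C" "G face_of C \<inter> {x. a \<bullet> x \<le> b}" "G \<noteq> {}"
  shows "amenable_face G (C \<inter> {x. a \<bullet> x \<le> b})"
proof -
  define D where "D = C \<inter> {x. a \<bullet> x \<le> b}"
  have "closed C" "convex C"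
    using assms(1) by (auto simp: amenable_set_def)
  then have "closed D"
    unfolding D_def by (auto intro: closed_halfspace_le)
  obtain z where z: "z \<in> rel_interior G"
    using assms(2,3) face_of_imp_convex rel_interior_eq_empty by blast
  then have "z \<in> D"
    using assms(2) face_of_imp_subset rel_interior_subset unfolding D_def by blast
  then have "D \<subseteq> C" "D \<noteq> {}"
    by (auto simp: D_def)
  obtain F where "F face_of C" "z \<in> rel_interior F"
    using face_of_with_rel_interior_point \<open>convex C\<close> \<open>z \<in> D\<close> unfolding D_def by blast
  then have "closed F" "convex F" "z \<in> F"
    using face_of_imp_closed face_of_imp_convex rel_interior_subset \<open>closed C\<close> \<open>convex C\<close> by blast+
  have F: "amenable_face F C"
    using assms(1) \<open>closed F\<close> \<open>F face_of C\<close> by (simp add: amenable_set_def is_face_iff_closed_face_of)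
  note G = face_of_Int_halfspace_cases[OF \<open>convex C\<close> assms(2) \<open>F face_of C\<close> z \<open>z \<in> rel_interior F\<close>]
  consider "a \<bullet> z < b" | "a \<bullet> z = b" "F \<subseteq> {x. a \<bullet> x = b}" | "a \<bullet> z = b" "\<not> F \<subseteq> {x. a \<bullet> x = b}"
    using \<open>z \<in> D\<close> by (force simp: D_def)
  then show ?thesis
  proof cases
    case 1
    then show ?thesis
      using G(1) amenable_face_Int_halfspace[OF F \<open>closed F\<close> \<open>convex F\<close> \<open>z \<in> F\<close> 1 \<open>closed D\<close> \<open>D \<noteq> {}\<close>]
      by (simp add: D_def)
  next
    case 2
    then have "G = F"
      using G(2) by blast
    then show ?thesis
      using amenable_face_subset[OF F \<open>D \<subseteq> C\<close> \<open>D \<noteq> {}\<close>] by (simp add: D_def)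
  next
    case 3
    then obtain p q where "p \<in> F" "q \<in> F" "a \<bullet> p < b" "b < a \<bullet> q"
      using rel_interior_hyperplane_both_sides \<open>convex F\<close> \<open>z \<in> rel_interior F\<close> by blast
    then show ?thesis
      using G(2)[OF \<open>a \<bullet> z = b\<close>] amenable_face_Int_hyperplane[OF F \<open>closed F\<close> \<open>convex F\<close>]
        \<open>D \<subseteq> C\<close> \<open>D \<noteq> {}\<close> by (simp add: D_def)
  qed
qed

lemma amenable_set_Int_halfspace:
  fixes C :: "'a::euclidean_space set"
  assumes "amenable_set C"
  shows "amenable_set (C \<inter> {x. a \<bullet> x \<le> b})"
proof -
  have "closed C" "convex C"
    using assms by (auto simp: amenable_set_def)
  moreover have "amenable_face G (C \<inter> {x. a \<bullet> x \<le> b})" if "is_face G (C \<inter> {x. a \<bullet> x \<le> b})" for G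
  proof (cases "G = {}")
    case True
    then show ?thesis
      by (auto simp: amenable_face_def intro: exI[of _ 1])
  next
    case False
    then show ?thesis
      using face_of_Int_halfspace_imp_amenable[OF assms _ False] that
      by (simp add: is_face_iff_closed_face_of)
  qed
  ultimately show ?thesis
    by (auto simp: amenable_set_def intro: closed_halfspace_le convex_Int convex_halfspace_le)
qed

lemma amenable_set_Int_polyhedron:
  fixes K P :: "'a::euclidean_space set"
  assumes "amenable_set K" "polyhedron P"
  shows "amenable_set (K \<inter> P)"
proof -
  obtain \<H> where "finite \<H>" "P = \<Inter> \<H>" and halfspaces: "\<forall>h\<in>\<H>. \<exists>a b. a \<noteq> 0 \<and> h = {x. a \<bullet> x \<le> b}"
    using assms(2) unfolding polyhedron_def by blast
  from \<open>finite \<H>\<close> halfspaces have "amenable_set (K \<inter> \<Inter> \<H>)"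
  proof (induction \<H> rule: finite_induct)
    case empty
    then show ?case
      using assms(1) by simp
  next
    case (insert h \<H>)
    then obtain a b where "h = {x. a \<bullet> x \<le> b}"
      by blast
    moreover have "K \<inter> \<Inter> (insert h \<H>) = (K \<inter> \<Inter> \<H>) \<inter> h"
      by blast
    ultimately show ?case
      using insert amenable_set_Int_halfspace by simp
  qed
  then show ?thesis
    using \<open>P = \<Inter> \<H>\<close> by simp
qed

lemma cone_eq_cone_gen_Int_cube:
  fixes K :: "'a::euclidean_space set"
  assumes "cone K"
  shows "K = cone_gen (K \<inter> cbox (- One) One)"
proof
  show "cone_gen (K \<inter> cbox (- One) One) \<subseteq> K"
    using assms unfolding cone_gen_def cone_def by blast
  show "K \<subseteq> cone_gen (K \<inter> cbox (- One) One)"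
  proof
    fix y
    assume "y \<in> K"
    define t where "t = norm y + 1"
    have "t > 0"
      by (simp add: t_def add_nonneg_pos)
    define x where "x = (1 / t) *\<^sub>R y"
    have "x \<in> K"
      using assms \<open>y \<in> K\<close> \<open>t > 0\<close> unfolding cone_def x_def by simp
    have "norm x \<le> 1"
      using \<open>t > 0\<close> by (simp add: x_def t_def divide_simps)
    then have "x \<in> cbox (- One) One"
      using Basis_le_norm[of _ x] by (force simp: mem_box inner_minus_left abs_le_iff)
    moreover have "y = t *\<^sub>R x"
      using \<open>t > 0\<close> by (simp add: x_def)
    ultimately show "y \<in> cone_gen (K \<inter> cbox (- One) One)"
      unfolding cone_gen_def using \<open>x \<in> K\<close> \<open>t > 0\<close> by force
  qed
qed

theorem proposition4p1:
  fixes K P :: "'a::euclidean_space set"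
  assumes "closed K" and "convex K" and "cone K" and "amenable_set K"
    and "polyhedron P"
  shows "amenable_set (K \<inter> P) \<and>
    (pointed K \<longrightarrow> (\<exists>C. compact C \<and> convex C \<and> amenable_set C \<and> C \<subseteq> K \<and> K = cone_gen C))"
proof
  show "amenable_set (K \<inter> P)"
    using assms(4,5) by (rule amenable_set_Int_polyhedron)
  define C where "C = K \<inter> cbox (- One) (One :: 'a)"
  have "compact C"
    unfolding C_def using assms(1) by (intro closed_Int_compact compact_cbox)
  moreover have "convex C"
    unfolding C_def using assms(2) by (intro convex_Int convex_box)
  moreover have "amenable_set C"
    unfolding C_def using assms(4) polyhedron_interval by (rule amenable_set_Int_polyhedron)
  moreover have "K = cone_gen C"
    unfolding C_def using assms(3) by (rule cone_eq_cone_gen_Int_cube)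
  ultimately show "pointed K \<longrightarrow> (\<exists>C. compact C \<and> convex C \<and> amenable_set C \<and> C \<subseteq> K \<and> K = cone_gen C)"
    unfolding C_def by blast
qed

end
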